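(* Let $A:\mathbb{R}\to M_{p\times p}(\mathbb{R})$ and $B,C:\mathbb{R}\to\mathbb{R}^p$, and let $\{Y_N(t)\}_{N\in\mathbb{N}}$ be the associated sequence of time-varying linear state space processes. Suppose (C1) $A,B,C$ are continuous; (C2) $\|B(s)\|<\infty$ for all $s\in\mathbb{R}$ and $\sup_{s\in\mathbb{R}}\|C(s)\|<\infty$; (C3) for every $t\in\mathbb{R}$ there is a real function $F_t\in L^2((-\infty,0])$ with $\|\Psi^0_{N,t}(0,u)\|\le F_t(u)$ for all $u\le0$ and all $N\in\mathbb{N}$. Then $\{Y_N(t)\}$ is locally stationary (with kernels $g_N^0$ and limiting kernel $g$ as below).
   Context: $L$ is a two-sided real Lévy process ($L(t)=L_1(t)\mathbb{1}_{\{t\ge0\}}-L_2(-t)\mathbb{1}_{\{t<0\}}$, $L_1,L_2$ independent copies of a Lévy process) with $E[L(1)]=0$, $E[L(1)^2]<\infty$. For fixed $t\in\mathbb{R}$, $N\in\mathbb{N}$, $\Psi^0_{N,t}(s,s_0)$ denotes the solution of $\Psi^0_{N,t}(s_0,s_0)=\mathbf{1}_p$, $\frac{d}{ds}\Psi^0_{N,t}(s,s_0)=A(\tfrac{s}{N}+t)\Psi^0_{N,t}(s,s_0)$, and $\Psi_t(s,s_0)=e^{A(t)(s-s_0)}$ is the solution of $\Psi_t(s_0,s_0)=\mathbf{1}_p$, $\frac{d}{ds}\Psi_t(s,s_0)=A(t)\Psi_t(s,s_0)$. The sequence of time-varying linear state space processes is $Y_N(t)=\int_{\mathbb{R}}\mathbb{1}_{\{Nt-u\ge0\}}B(t)'\Psi^0_{N,t}(0,-(Nt-u))C(\tfrac{u}{N})\,L(du)$,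 i.e. $Y_N(t)=\int g_N^0(Nt,Nt-u)L(du)$ with kernel $g_N^0(Nt,v)=\mathbb{1}_{\{v\ge0\}}B(t)'\Psi^0_{N,t}(0,-v)C(t-\tfrac{v}{N})$, and the limiting kernel is $g(t,v)=\mathbb{1}_{\{v\ge0\}}B(t)'\Psi_t(0,-v)C(t)$. A sequence $\{Y_N(t)\}$ is locally stationary if $Y_N(t)=\int_{\mathbb{R}}g_N^0(Nt,Nt-u)L(du)$ for all $t,N$ with $g_N^0(Nt,\cdot)\in L^2(\mathbb{R})$ and there is a limiting kernel $g:\mathbb{R}^2\to\mathbb{R}$ with $t\mapsto g(t,\cdot)$ continuous into $L^2(\mathbb{R})$ and $g_N^0(Nt,\cdot)\to g(t,\cdot)$ in $L^2(\mathbb{R})$ for every $t$. *)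

theory Defs
  imports "HOL-Analysis.Analysis"
begin

definition L2_real :: "(real \<Rightarrow> real) \<Rightarrow> bool" where
  "L2_real f \<longleftrightarrow> f \<in> borel_measurable lborel \<and> integrable lborel (\<lambda>x. (f x)\<^sup>2)"

definition L2_dist_sq :: "(real \<Rightarrow> real) \<Rightarrow> (real \<Rightarrow> real) \<Rightarrow> real" where
  "L2_dist_sq f h = (LINT x|lborel. (f x - h x)\<^sup>2)"

text \<open>Local stationarity, stated on the kernels: gN N t v stands for g_N^0(Nt, v),
  g t v for the limiting kernel g(t,v). N ranges over the positive naturals.\<close>
definition locally_stationary_kernels ::
  "(nat \<Rightarrow> real \<Rightarrow> real \<Rightarrow> real) \<Rightarrow> (real \<Rightarrow> real \<Rightarrow> real) \<Rightarrow> bool" where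
  "locally_stationary_kernels gN g \<longleftrightarrow>
     (\<forall>N t. N \<ge> 1 \<longrightarrow> L2_real (gN N t)) \<and>
     (\<forall>t. L2_real (g t)) \<and>
     (\<forall>t. ((\<lambda>s. L2_dist_sq (g s) (g t)) \<longlongrightarrow> 0) (at t)) \<and>
     (\<forall>t. (\<lambda>N. L2_dist_sq (gN N t) (g t)) \<longlonglongrightarrow> 0)"

definition tv_kernel ::
  "(real \<Rightarrow> real^'p) \<Rightarrow> (real \<Rightarrow> real^'p) \<Rightarrow>
   (nat \<Rightarrow> real \<Rightarrow> real \<Rightarrow> real \<Rightarrow> real^'p^'p) \<Rightarrow> nat \<Rightarrow> real \<Rightarrow> real \<Rightarrow> real" where
  "tv_kernel B C Psi0 N t v =
     (if v \<ge> 0 then B t \<bullet> (Psi0 N t 0 (- v) *v C (t - v / real N)) else 0)"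

definition lim_kernel ::
  "(real \<Rightarrow> real^'p) \<Rightarrow> (real \<Rightarrow> real^'p) \<Rightarrow>
   (real \<Rightarrow> real \<Rightarrow> real \<Rightarrow> real^'p^'p) \<Rightarrow> real \<Rightarrow> real \<Rightarrow> real" where
  "lim_kernel B C Psi t v =
     (if v \<ge> 0 then B t \<bullet> (Psi t 0 (- v) *v C t) else 0)"

end

theory Submission
  imports Defs
begin

(* The kernels are dominated, uniformly in N, by the square integrable function
   v \<mapsto> |B(t)| sup|C| F_t(-v) given by (C3).  The transition matrices Psi^0_{N,t} converge to
   the frozen ones Psi_t, since their coefficients A(s/N + t) converge to A(t) uniformly on compact
   time intervals and a Gronwall comparison controls the solutions; dominated convergence then
   gives g_N^0(Nt, .) \<rightarrow> g(t, .) in L^2.  Continuity of t \<mapsto> g(t, .) in L^2 needs a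
   dominating function that is uniform in t near t0: square integrability of the frozen flow forces
   |Psi_t0(0, -T)| < 1/4 for some T, hence |Psi_t(0, -T)| \<le> 1/2 for t near t0, and the
   semigroup property of the frozen flows turns this into a locally uniform exponential bound. *)

section \<open>Matrix norms\<close>

text \<open>The norm on real^'n^'m is the Frobenius norm.\<close>

lemma power2_norm_vec: "(norm (x::real^'n))\<^sup>2 = (\<Sum>i\<in>UNIV. (x$i)\<^sup>2)"
  unfolding power2_norm_eq_inner inner_vec_def by (simp add: power2_eq_square)

lemma power2_norm_matrix: "(norm (M::real^'n^'m))\<^sup>2 = (\<Sum>i\<in>UNIV. (norm (M$i))\<^sup>2)"
  by (simp add: power2_norm_eq_inner inner_vec_def)

lemma norm_matrix_vector_mult_le: "norm ((A::real^'n^'m) *v x) \<le> norm A * norm x"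
proof -
  have "(norm (A *v x))\<^sup>2 = (\<Sum>i\<in>UNIV. (A$i \<bullet> x)\<^sup>2)"
    by (simp add: power2_norm_vec matrix_mult_dot)
  also have "\<dots> \<le> (\<Sum>i\<in>UNIV. (norm (A$i) * norm x)\<^sup>2)"
  proof (rule sum_mono)
    fix i
    have "\<bar>A$i \<bullet> x\<bar> \<le> norm (A$i) * norm x"
      by (rule Cauchy_Schwarz_ineq2)
    then show "(A$i \<bullet> x)\<^sup>2 \<le> (norm (A$i) * norm x)\<^sup>2"
      by (metis abs_ge_zero power2_abs power_mono)
  qed
  also have "\<dots> = (norm A * norm x)\<^sup>2"
    by (simp add: power2_norm_matrix power_mult_distrib sum_distrib_right)
  finally show ?thesis
    by (meson mult_nonneg_nonneg norm_ge_zero power2_le_imp_le)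
qed

lemma norm_transpose: "norm (transpose (M::real^'n^'m)) = norm M"
proof -
  have "(norm (transpose M))\<^sup>2 = (\<Sum>i\<in>UNIV. \<Sum>j\<in>UNIV. (M$j$i)\<^sup>2)"
    by (simp add: power2_norm_matrix power2_norm_vec transpose_def)
  also have "\<dots> = (\<Sum>j\<in>UNIV. \<Sum>i\<in>UNIV. (M$j$i)\<^sup>2)"
    by (rule sum.swap)
  also have "\<dots> = (norm M)\<^sup>2"
    by (simp add: power2_norm_matrix power2_norm_vec)
  finally have "(norm (transpose M))\<^sup>2 = (norm M)\<^sup>2" .
  then show ?thesis
    by (simp add: power2_eq_iff_nonneg)
qed

lemma norm_matrix_mult_le: "norm ((A::real^'n^'m) ** (B::real^'k^'n)) \<le> norm A * norm B"
proof -
  have row: "(A ** B) $ i = transpose B *v A $ i" for i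
    by (simp add: vec_eq_iff matrix_matrix_mult_def matrix_vector_mult_def transpose_def mult.commute)
  have "(norm (A ** B))\<^sup>2 = (\<Sum>i\<in>UNIV. (norm ((A ** B) $ i))\<^sup>2)"
    by (rule power2_norm_matrix)
  also have "\<dots> \<le> (\<Sum>i\<in>UNIV. (norm B * norm (A $ i))\<^sup>2)"
    using norm_matrix_vector_mult_le[of "transpose B"]
    by (intro sum_mono power_mono) (simp_all add: row norm_transpose)
  also have "\<dots> = (norm A * norm B)\<^sup>2"
    by (simp add: power2_norm_matrix[of A] power_mult_distrib sum_distrib_left[symmetric] mult.commute)
  finally show ?thesis
    by (meson mult_nonneg_nonneg norm_ge_zero power2_le_imp_le)
qed

lemma bounded_bilinear_matrix_vector_mult:
  "bounded_bilinear ((*v) :: real^'n^'m \<Rightarrow> real^'n \<Rightarrow> real^'m)"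
proof
  fix A A' :: "real^'n^'m" and x x' :: "real^'n" and r :: real
  show "(A + A') *v x = A *v x + A' *v x"
    by (vector matrix_vector_mult_def sum.distrib[symmetric] field_simps)
  show "A *v (x + x') = A *v x + A *v x'"
    by (vector matrix_vector_mult_def sum.distrib[symmetric] field_simps)
  show "(r *\<^sub>R A) *v x = r *\<^sub>R (A *v x)"
    by (vector matrix_vector_mult_def sum_distrib_left field_simps)
  show "A *v (r *\<^sub>R x) = r *\<^sub>R (A *v x)"
    by (vector matrix_vector_mult_def sum_distrib_left field_simps)
  show "\<exists>K. \<forall>A x. norm ((A::real^'n^'m) *v x) \<le> norm A * norm x * K"
    by (rule exI[of _ 1]) (simp add: norm_matrix_vector_mult_le)
qed

lemma bounded_bilinear_matrix_matrix_mult: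
  "bounded_bilinear ((**) :: real^'n^'m \<Rightarrow> real^'k^'n \<Rightarrow> real^'k^'m)"
proof
  fix A A' :: "real^'n^'m" and B B' :: "real^'k^'n" and r :: real
  show "(A + A') ** B = A ** B + A' ** B"
    by (vector matrix_matrix_mult_def sum.distrib[symmetric] field_simps)
  show "A ** (B + B') = A ** B + A ** B'"
    by (vector matrix_matrix_mult_def sum.distrib[symmetric] field_simps)
  show "(r *\<^sub>R A) ** B = r *\<^sub>R (A ** B)"
    by (vector matrix_matrix_mult_def sum_distrib_left field_simps)
  show "A ** (r *\<^sub>R B) = r *\<^sub>R (A ** B)"
    by (vector matrix_matrix_mult_def sum_distrib_left field_simps)
  show "\<exists>K. \<forall>A B. norm ((A::real^'n^'m) ** (B::real^'k^'n)) \<le> norm A * norm B * K"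
    by (rule exI[of _ 1]) (simp add: norm_matrix_mult_le)
qed

interpretation matrix_vector_mult: bounded_bilinear "(*v) :: real^'n^'m \<Rightarrow> real^'n \<Rightarrow> real^'m"
  by (rule bounded_bilinear_matrix_vector_mult)

interpretation matrix_matrix_mult: bounded_bilinear "(**) :: real^'n^'m \<Rightarrow> real^'k^'n \<Rightarrow> real^'k^'m"
  by (rule bounded_bilinear_matrix_matrix_mult)

section \<open>Linear matrix differential equations\<close>

lemma has_real_derivative_inner_self:
  fixes D :: "real \<Rightarrow> 'a::real_inner"
  assumes "(D has_vector_derivative D') (at s)"
  shows "((\<lambda>s. D s \<bullet> D s) has_real_derivative 2 * (D s \<bullet> D')) (at s)"
proof -
  have "(D has_derivative (\<lambda>h. h *\<^sub>R D')) (at s)"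
    using assms by (simp add: has_vector_derivative_def)
  from has_derivative_inner[OF this this]
  have "((\<lambda>s. D s \<bullet> D s) has_derivative (\<lambda>h. D s \<bullet> (h *\<^sub>R D') + (h *\<^sub>R D') \<bullet> D s)) (at s)" .
  moreover have "(\<lambda>h. D s \<bullet> (h *\<^sub>R D') + (h *\<^sub>R D') \<bullet> D s) = (*) (2 * (D s \<bullet> D'))"
    by (auto simp: inner_commute algebra_simps)
  ultimately show ?thesis
    by (simp add: has_field_derivative_def)
qed

lemma gronwall_inequality:
  fixes \<phi> \<phi>' :: "real \<Rightarrow> real"
  assumes "a \<le> b" "0 \<le> c" "0 \<le> E"
    and deriv: "\<And>s. s \<in> {a..b} \<Longrightarrow> (\<phi> has_real_derivative \<phi>' s) (at s)"
    and bound: "\<And>s. s \<in> {a..b} \<Longrightarrow> \<phi>' s \<le> c * \<phi> s + E"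
  shows "\<phi> b \<le> exp (c * (b - a)) * (\<phi> a + E * (b - a))"
proof -
  define h where "h s = exp (- c * (s - a)) * \<phi> s - E * (s - a)" for s
  have "h b \<le> h a"
  proof (rule DERIV_nonpos_imp_nonincreasing[OF \<open>a \<le> b\<close>])
    fix s assume "a \<le> s" "s \<le> b"
    then have s: "s \<in> {a..b}" by simp
    have "(h has_real_derivative exp (- c * (s - a)) * (\<phi>' s - c * \<phi> s) - E) (at s)"
      unfolding h_def by (auto intro!: derivative_eq_intros deriv[OF s] simp: algebra_simps)
    moreover have "exp (- c * (s - a)) * (\<phi>' s - c * \<phi> s) \<le> exp (- c * (s - a)) * E"
      using bound[OF s] by (intro mult_left_mono) auto
    moreover have "exp (- c * (s - a)) \<le> 1"
      using \<open>0 \<le> c\<close> \<open>a \<le> s\<close> by simp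
    ultimately show "\<exists>y. (h has_real_derivative y) (at s) \<and> y \<le> 0"
      using \<open>0 \<le> E\<close> by (metis diff_le_0_iff_le mult_left_le_one_le exp_ge_zero order_trans)
  qed
  then have "exp (- c * (b - a)) * \<phi> b \<le> \<phi> a + E * (b - a)"
    by (simp add: h_def)
  then have "exp (c * (b - a)) * (exp (- c * (b - a)) * \<phi> b) \<le> exp (c * (b - a)) * (\<phi> a + E * (b - a))"
    by (intro mult_left_mono) auto
  then show ?thesis
    by (simp add: mult.assoc[symmetric] exp_add[symmetric])
qed

lemma matrix_ode_comparison:
  fixes X Y :: "real \<Rightarrow> real^'k^'n" and M L :: "real \<Rightarrow> real^'n^'n"
  assumes "a \<le> b"
    and dX: "\<And>s. s \<in> {a..b} \<Longrightarrow> (X has_vector_derivative (M s ** X s)) (at s)"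
    and dY: "\<And>s. s \<in> {a..b} \<Longrightarrow> (Y has_vector_derivative (L s ** Y s)) (at s)"
    and K: "\<And>s. s \<in> {a..b} \<Longrightarrow> norm (M s) \<le> K"
    and E: "\<And>s. s \<in> {a..b} \<Longrightarrow> norm ((M s - L s) ** Y s) \<le> E"
  shows "(norm (X b - Y b))\<^sup>2 \<le> exp ((2*K + 1) * (b - a)) * ((norm (X a - Y a))\<^sup>2 + E\<^sup>2 * (b - a))"
proof -
  have "0 \<le> K"
    using K[of a] \<open>a \<le> b\<close> by (auto intro: order_trans[OF norm_ge_zero])
  define D where "D s = X s - Y s" for s
  define D' where "D' s = M s ** D s + (M s - L s) ** Y s" for s
  have dD: "(D has_vector_derivative D' s) (at s)" if "s \<in> {a..b}" for s
    using has_vector_derivative_diff[OF dX[OF that] dY[OF that]] unfolding D_def D'_def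
    by (simp add: matrix_matrix_mult.diff_left matrix_matrix_mult.diff_right)
  have "2 * (D s \<bullet> D' s) \<le> (2*K + 1) * (D s \<bullet> D s) + E\<^sup>2" if s: "s \<in> {a..b}" for s
  proof -
    have "D s \<bullet> D' s \<le> norm (D s) * norm (M s ** D s) + norm (D s) * norm ((M s - L s) ** Y s)"
      unfolding D'_def inner_add_right by (intro add_mono norm_cauchy_schwarz)
    also have "\<dots> \<le> norm (D s) * (K * norm (D s)) + norm (D s) * E"
    proof (intro add_mono mult_left_mono)
      show "norm (M s ** D s) \<le> K * norm (D s)"
        using norm_matrix_mult_le[of "M s" "D s"] K[OF s] by (meson mult_right_mono norm_ge_zero order_trans)
    qed (use E[OF s] in auto)
    finally have "D s \<bullet> D' s \<le> K * (norm (D s))\<^sup>2 + norm (D s) * E"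
      by (simp add: power2_eq_square algebra_simps)
    moreover have "2 * (norm (D s) * E) \<le> (norm (D s))\<^sup>2 + E\<^sup>2"
      using sum_squares_bound[of "norm (D s)" E] by (simp add: power2_eq_square algebra_simps)
    ultimately show ?thesis
      by (simp add: power2_norm_eq_inner algebra_simps)
  qed
  then have "D b \<bullet> D b \<le> exp ((2*K + 1) * (b - a)) * (D a \<bullet> D a + E\<^sup>2 * (b - a))"
    using \<open>0 \<le> K\<close> \<open>a \<le> b\<close>
    by (intro gronwall_inequality[where \<phi>'="\<lambda>s. 2 * (D s \<bullet> D' s)"] has_real_derivative_inner_self dD) auto
  then show ?thesis
    by (simp add: D_def power2_norm_eq_inner)
qed

definition transition_matrix :: "(real \<Rightarrow> real^'n^'n) \<Rightarrow> (real \<Rightarrow> real \<Rightarrow> real^'n^'n) \<Rightarrow> bool" where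
  "transition_matrix M X \<longleftrightarrow> continuous_on UNIV M \<and> (\<forall>u. X u u = mat 1) \<and>
     (\<forall>s u. ((\<lambda>s. X s u) has_vector_derivative (M s ** X s u)) (at s))"

lemma transition_matrixD:
  assumes "transition_matrix M X"
  shows "X u u = mat 1" "((\<lambda>s. X s u) has_vector_derivative (M s ** X s u)) (at s)"
    "continuous_on UNIV M"
  using assms by (auto simp: transition_matrix_def)

lemma continuous_on_UNIV_bound_Icc:
  fixes M :: "real \<Rightarrow> 'a::real_normed_vector"
  assumes "continuous_on UNIV M"
  obtains K where "0 \<le> K" "\<And>s. s \<in> {a..b} \<Longrightarrow> norm (M s) \<le> K"
  using continuous_on_compact_bound[OF compact_Icc continuous_on_subset[OF assms subset_UNIV]]
  by blast

lemma transition_matrix_growth: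
  fixes X :: "real \<Rightarrow> real \<Rightarrow> real^'n^'n"
  assumes X: "transition_matrix M X" and "u \<le> s"
    and K: "\<And>\<sigma>. \<sigma> \<in> {u..s} \<Longrightarrow> norm (M \<sigma>) \<le> K"
  shows "(norm (X s u))\<^sup>2 \<le> exp ((2*K + 1) * (s - u)) * (norm (mat 1 :: real^'n^'n))\<^sup>2"
proof -
  have "(norm (X s u - 0))\<^sup>2 \<le> exp ((2*K + 1) * (s - u)) * ((norm (X u u - 0))\<^sup>2 + 0\<^sup>2 * (s - u))"
    by (rule matrix_ode_comparison[where X="\<lambda>s. X s u" and Y="\<lambda>_. 0" and L=M])
      (use \<open>u \<le> s\<close> K transition_matrixD(2)[OF X] in \<open>auto simp: matrix_matrix_mult.zero_right\<close>)
  then show ?thesis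
    by (simp add: transition_matrixD(1)[OF X])
qed

lemma transition_matrix_near_identity:
  assumes X: "transition_matrix M X" and "u \<le> s"
    and K: "\<And>\<sigma>. \<sigma> \<in> {u..s} \<Longrightarrow> norm (M \<sigma>) \<le> K"
  shows "(norm (X s u - mat 1))\<^sup>2 \<le> exp ((2*K + 1) * (s - u)) * (K\<^sup>2 * (s - u))"
proof -
  have "(norm (X s u - mat 1))\<^sup>2
      \<le> exp ((2*K + 1) * (s - u)) * ((norm (X u u - mat 1))\<^sup>2 + K\<^sup>2 * (s - u))"
    by (rule matrix_ode_comparison[where X="\<lambda>s. X s u" and Y="\<lambda>_. mat 1" and L="\<lambda>_. 0"])
      (use \<open>u \<le> s\<close> K transition_matrixD(2)[OF X] in auto)
  then show ?thesis
    by (simp add: transition_matrixD(1)[OF X])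
qed

lemma transition_matrix_initial_time_lipschitz:
  assumes X: "transition_matrix M X" and "p \<le> q" "q \<le> b"
    and K: "\<And>\<sigma>. \<sigma> \<in> {p..b} \<Longrightarrow> norm (M \<sigma>) \<le> K"
  shows "(norm (X b q - X b p))\<^sup>2 \<le> exp ((2*K + 1) * (b - p)) * (K\<^sup>2 * (q - p))"
proof -
  have exp_sum: "exp ((2*K + 1) * (b - q)) * exp ((2*K + 1) * (q - p)) = exp ((2*K + 1) * (b - p))"
    by (subst exp_add[symmetric]) (simp add: algebra_simps)
  have "(norm (X b q - X b p))\<^sup>2
      \<le> exp ((2*K + 1) * (b - q)) * ((norm (X q q - X q p))\<^sup>2 + 0\<^sup>2 * (b - q))"
  proof (rule matrix_ode_comparison[where X="\<lambda>s. X s q" and Y="\<lambda>s. X s p" and L=M])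
    fix \<sigma> assume "\<sigma> \<in> {q..b}"
    then show "norm (M \<sigma>) \<le> K"
      using K \<open>p \<le> q\<close> by simp
  qed (simp_all add: \<open>q \<le> b\<close> transition_matrixD(2)[OF X])
  also have "(norm (X q q - X q p))\<^sup>2 = (norm (X q p - mat 1))\<^sup>2"
    by (simp add: transition_matrixD(1)[OF X] norm_minus_commute)
  also have "exp ((2*K + 1) * (b - q)) * ((norm (X q p - mat 1))\<^sup>2 + 0\<^sup>2 * (b - q))
      \<le> exp ((2*K + 1) * (b - q)) * (exp ((2*K + 1) * (q - p)) * (K\<^sup>2 * (q - p)))"
  proof (rule mult_left_mono)
    show "(norm (X q p - mat 1))\<^sup>2 + 0\<^sup>2 * (b - q) \<le> exp ((2*K + 1) * (q - p)) * (K\<^sup>2 * (q - p))"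
      using transition_matrix_near_identity[OF X \<open>p \<le> q\<close>, of K] K \<open>q \<le> b\<close> by simp
  qed simp
  also have "\<dots> = exp ((2*K + 1) * (b - p)) * (K\<^sup>2 * (q - p))"
    using exp_sum by (simp add: mult.assoc[symmetric])
  finally show ?thesis .
qed

lemma transition_matrix_initial_time_holder:
  assumes X: "transition_matrix M X" and "a \<le> p" "a \<le> q" "p \<le> b" "q \<le> b"
    and K: "\<And>\<sigma>. \<sigma> \<in> {a..b} \<Longrightarrow> norm (M \<sigma>) \<le> K"
  shows "(norm (X b q - X b p))\<^sup>2 \<le> exp ((2*K + 1) * (b - a)) * K\<^sup>2 * \<bar>q - p\<bar>"
proof -
  have "0 \<le> K"
    using K[of a] assms by (meson atLeastAtMost_iff norm_ge_zero order_trans order_refl)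
  have *: "(norm (X b y - X b x))\<^sup>2 \<le> exp ((2*K + 1) * (b - a)) * K\<^sup>2 * (y - x)"
    if "a \<le> x" "x \<le> y" "y \<le> b" for x y
  proof -
    have "(norm (X b y - X b x))\<^sup>2 \<le> exp ((2*K + 1) * (b - x)) * (K\<^sup>2 * (y - x))"
      by (rule transition_matrix_initial_time_lipschitz[OF X that(2,3)]) (use K that(1) in auto)
    also have "\<dots> \<le> exp ((2*K + 1) * (b - a)) * (K\<^sup>2 * (y - x))"
      using that \<open>0 \<le> K\<close> by (intro mult_right_mono) (simp_all add: mult_left_mono)
    finally show ?thesis
      by (simp add: mult.assoc)
  qed
  show ?thesis
  proof (cases "p \<le> q")
    case True
    then show ?thesis using *[of p q] assms by simp
  next
    case False
    then show ?thesis using *[of q p] assms by (simp add: norm_minus_commute)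
  qed
qed

lemma transition_matrix_continuous_on_initial_time:
  assumes X: "transition_matrix M X"
  shows "continuous_on {..b} (\<lambda>u. X b u)"
  unfolding continuous_on_def
proof
  fix u0 assume "u0 \<in> {..b}"
  obtain K where K: "\<And>\<sigma>. \<sigma> \<in> {u0 - 1..b} \<Longrightarrow> norm (M \<sigma>) \<le> K"
    using continuous_on_UNIV_bound_Icc[OF transition_matrixD(3)[OF X]] by blast
  define c where "c = exp ((2*K + 1) * (b - (u0 - 1))) * K\<^sup>2"
  have "norm (X b u - X b u0) \<le> sqrt (c * \<bar>u - u0\<bar>)" if "u \<le> b" "\<bar>u - u0\<bar> < 1" for u
  proof (rule real_le_rsqrt)
    show "(norm (X b u - X b u0))\<^sup>2 \<le> c * \<bar>u - u0\<bar>"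
      unfolding c_def using \<open>u0 \<in> {..b}\<close> that
      by (intro transition_matrix_initial_time_holder[OF X _ _ _ _ K]) auto
  qed
  then have "\<forall>\<^sub>F u in at u0 within {..b}. norm (X b u - X b u0) \<le> sqrt (c * \<bar>u - u0\<bar>)"
    unfolding eventually_at by (intro exI[of _ 1]) (auto simp: dist_real_def)
  moreover have "((\<lambda>u. sqrt (c * \<bar>u - u0\<bar>)) \<longlongrightarrow> 0) (at u0 within {..b})"
  proof -
    have "((\<lambda>u. sqrt (c * \<bar>u - u0\<bar>)) \<longlongrightarrow> sqrt (c * \<bar>u0 - u0\<bar>)) (at u0 within {..b})"
      by (intro tendsto_intros)
    then show ?thesis
      by simp
  qed
  ultimately have "((\<lambda>u. X b u - X b u0) \<longlongrightarrow> 0) (at u0 within {..b})"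
    by (rule Lim_null_comparison)
  then show "((\<lambda>u. X b u) \<longlongrightarrow> X b u0) (at u0 within {..b})"
    by (rule LIM_zero_cancel)
qed

lemma transition_matrix_cocycle:
  assumes X: "transition_matrix M X" and "u \<le> w" "w \<le> b"
  shows "X b u = X b w ** X w u"
proof -
  obtain K where K: "\<And>\<sigma>. \<sigma> \<in> {w..b} \<Longrightarrow> norm (M \<sigma>) \<le> K"
    using continuous_on_UNIV_bound_Icc[OF transition_matrixD(3)[OF X]] by blast
  have "(norm (X b u - X b w ** X w u))\<^sup>2
      \<le> exp ((2*K + 1) * (b - w)) * ((norm (X w u - X w w ** X w u))\<^sup>2 + 0\<^sup>2 * (b - w))"
  proof (rule matrix_ode_comparison[where X="\<lambda>s. X s u" and Y="\<lambda>s. X s w ** X w u" and L=M])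
    fix s
    show "((\<lambda>s. X s w ** X w u) has_vector_derivative M s ** (X s w ** X w u)) (at s)"
      using matrix_matrix_mult.has_vector_derivative[OF transition_matrixD(2)[OF X]
          has_vector_derivative_const[of "X w u"]]
      by (simp add: matrix_matrix_mult.zero_right matrix_mul_assoc)
  qed (use assms K transition_matrixD(2)[OF X] in auto)
  then show ?thesis
    by (simp add: transition_matrixD(1)[OF X])
qed

lemma transition_matrix_const_shift:
  assumes X: "transition_matrix (\<lambda>_. A0) X" and "u \<le> s"
  shows "X s u = X (s - u) 0"
proof -
  have "(norm (X s u - X (s - u) 0))\<^sup>2
      \<le> exp ((2 * norm A0 + 1) * (s - u)) * ((norm (X u u - X (u - u) 0))\<^sup>2 + 0\<^sup>2 * (s - u))"
  proof (rule matrix_ode_comparison[where X="\<lambda>s. X s u" and Y="\<lambda>s. X (s - u) 0" and L="\<lambda>_. A0"])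
    fix \<sigma>
    have "((\<lambda>s. X s 0) \<circ> (\<lambda>\<sigma>. \<sigma> - u) has_vector_derivative 1 *\<^sub>R (A0 ** X (\<sigma> - u) 0)) (at \<sigma>)"
      by (rule vector_diff_chain_at) (auto intro!: derivative_eq_intros transition_matrixD(2)[OF X])
    then show "((\<lambda>s. X (s - u) 0) has_vector_derivative A0 ** X (\<sigma> - u) 0) (at \<sigma>)"
      by (simp add: o_def)
  qed (use assms transition_matrixD(2)[OF X] in auto)
  then show ?thesis
    by (simp add: transition_matrixD(1)[OF X])
qed

lemma transition_matrix_const_semigroup:
  assumes X: "transition_matrix (\<lambda>_. A0) X" and "0 \<le> v" "0 \<le> T"
  shows "X 0 (-(v + T)) = X 0 (-T) ** X 0 (-v)"
proof -
  have "X 0 (-(v + T)) = X 0 (-T) ** X (-T) (-(v + T))"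
    by (rule transition_matrix_cocycle[OF X]) (use assms in auto)
  also have "X (-T) (-(v + T)) = X 0 (-v)"
    using transition_matrix_const_shift[OF X, of "-(v + T)" "-T"]
      transition_matrix_const_shift[OF X, of "-v" 0] assms by simp
  finally show ?thesis .
qed

lemma transition_matrix_dist_le:
  assumes X: "transition_matrix M X" and Y: "transition_matrix L Y" and "u \<le> b"
    and K: "\<And>\<sigma>. \<sigma> \<in> {u..b} \<Longrightarrow> norm (M \<sigma>) \<le> K"
    and E: "\<And>\<sigma>. \<sigma> \<in> {u..b} \<Longrightarrow> norm (M \<sigma> - L \<sigma>) * norm (Y \<sigma> u) \<le> E"
  shows "norm (X b u - Y b u) \<le> sqrt (exp ((2*K + 1) * (b - u)) * (b - u)) * E"
proof -
  have "0 \<le> E"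
    using E[of u] \<open>u \<le> b\<close> by (meson atLeastAtMost_iff mult_nonneg_nonneg norm_ge_zero order_refl order_trans)
  have "(norm (X b u - Y b u))\<^sup>2 \<le> exp ((2*K + 1) * (b - u)) * ((norm (X u u - Y u u))\<^sup>2 + E\<^sup>2 * (b - u))"
  proof (rule matrix_ode_comparison[where X="\<lambda>s. X s u" and Y="\<lambda>s. Y s u"])
    fix s assume "s \<in> {u..b}"
    show "norm ((M s - L s) ** Y s u) \<le> E"
      using norm_matrix_mult_le E[OF \<open>s \<in> {u..b}\<close>] by (rule order_trans)
  qed (use assms transition_matrixD(2) in auto)
  also have "\<dots> = (sqrt (exp ((2*K + 1) * (b - u)) * (b - u)) * E)\<^sup>2"
    using \<open>u \<le> b\<close> by (simp add: transition_matrixD(1)[OF X] transition_matrixD(1)[OF Y]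
        power_mult_distrib mult_ac)
  finally show ?thesis
    by (rule power2_le_imp_le) (use \<open>0 \<le> E\<close> \<open>u \<le> b\<close> in simp)
qed

lemma tendsto_of_eventually_norm_le:
  fixes f :: "'a \<Rightarrow> 'b::real_normed_vector"
  assumes "0 \<le> c" and le: "\<And>e. 0 < e \<Longrightarrow> \<forall>\<^sub>F n in F. norm (f n - l) \<le> c * e"
  shows "(f \<longlongrightarrow> l) F"
proof (rule tendstoI)
  fix e :: real assume "0 < e"
  then have "c * (e / (c + 1)) < e"
    using \<open>0 \<le> c\<close> by (simp add: field_simps)
  with le[of "e / (c + 1)"] \<open>0 < e\<close> \<open>0 \<le> c\<close> show "\<forall>\<^sub>F n in F. dist (f n) l < e"
    by (auto simp: dist_norm elim: eventually_mono)
qed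

lemma transition_matrix_tendsto:
  assumes X: "\<forall>\<^sub>F n in F. transition_matrix (M n) (X n)" and Y: "transition_matrix L Y"
    and "u \<le> b" and lim: "uniform_limit {u..b} M L F"
  shows "((\<lambda>n. X n b u) \<longlongrightarrow> Y b u) F"
proof -
  obtain KL where KL: "\<And>\<sigma>. \<sigma> \<in> {u..b} \<Longrightarrow> norm (L \<sigma>) \<le> KL"
    using continuous_on_UNIV_bound_Icc[OF transition_matrixD(3)[OF Y]] by blast
  have "continuous_on UNIV (\<lambda>\<sigma>. Y \<sigma> u)"
    using transition_matrixD(2)[OF Y] has_vector_derivative_continuous
    by (blast intro: continuous_at_imp_continuous_on)
  then obtain R where "0 \<le> R" and R: "\<And>\<sigma>. \<sigma> \<in> {u..b} \<Longrightarrow> norm (Y \<sigma> u) \<le> R"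
    using continuous_on_UNIV_bound_Icc by blast
  define K where "K = KL + 1"
  have near: "\<forall>\<^sub>F n in F. \<forall>\<sigma>\<in>{u..b}. norm (M n \<sigma> - L \<sigma>) < e" if "0 < e" for e
    using uniform_limitD[OF lim that] by (simp add: dist_norm)
  show ?thesis
  proof (rule tendsto_of_eventually_norm_le)
    show "0 \<le> sqrt (exp ((2*K + 1) * (b - u)) * (b - u)) * R"
      using \<open>u \<le> b\<close> \<open>0 \<le> R\<close> by simp
    fix e :: real assume "0 < e"
    show "\<forall>\<^sub>F n in F. norm (X n b u - Y b u) \<le> sqrt (exp ((2*K + 1) * (b - u)) * (b - u)) * R * e"
      using X near[OF \<open>0 < e\<close>] near[OF zero_less_one]
    proof eventually_elim
      case (elim n)
      have "norm (X n b u - Y b u) \<le> sqrt (exp ((2*K + 1) * (b - u)) * (b - u)) * (e * R)"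
      proof (rule transition_matrix_dist_le[OF elim(1) Y \<open>u \<le> b\<close>])
        fix \<sigma> assume \<sigma>: "\<sigma> \<in> {u..b}"
        have "norm (M n \<sigma> - L \<sigma>) < 1" "norm (M n \<sigma> - L \<sigma>) < e"
          using elim(2,3) \<sigma> by blast+
        then show "norm (M n \<sigma>) \<le> K"
          using norm_triangle_sub[of "M n \<sigma>" "L \<sigma>"] KL[OF \<sigma>] unfolding K_def by linarith
        show "norm (M n \<sigma> - L \<sigma>) * norm (Y \<sigma> u) \<le> e * R"
          using \<open>norm (M n \<sigma> - L \<sigma>) < e\<close> R[OF \<sigma>] \<open>0 < e\<close> by (intro mult_mono) auto
      qed
      then show ?case
        by (simp add: algebra_simps)
    qed
  qed
qed

lemma uniform_limit_of_tendsto_const_fun: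
  "(f \<longlongrightarrow> l) F \<Longrightarrow> uniform_limit S (\<lambda>n _. f n) (\<lambda>_. l) F"
  by (rule uniform_limitI) (auto dest: tendstoD elim: eventually_mono)

lemma uniform_limit_rescaled_time:
  fixes A :: "real \<Rightarrow> 'a::metric_space"
  assumes "isCont A t"
  shows "uniform_limit {a..b} (\<lambda>(N::nat) \<sigma>. A (\<sigma> / real N + t)) (\<lambda>_. A t) sequentially"
proof (rule uniform_limitI)
  fix e :: real assume "0 < e"
  then obtain d where "0 < d" and d: "\<And>x. dist x t < d \<Longrightarrow> dist (A x) (A t) < e"
    using assms continuous_at_eps_delta by blast
  have "((\<lambda>N. (\<bar>a\<bar> + \<bar>b\<bar>) / real N) \<longlongrightarrow> 0) sequentially"
    by (rule lim_const_over_n)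
  then have "\<forall>\<^sub>F N in sequentially. (\<bar>a\<bar> + \<bar>b\<bar>) / real N < d"
    using \<open>0 < d\<close> by (rule order_tendstoD)
  then show "\<forall>\<^sub>F N in sequentially. \<forall>\<sigma>\<in>{a..b}. dist (A (\<sigma> / real N + t)) (A t) < e"
  proof (rule eventually_mono)
    fix N assume N: "(\<bar>a\<bar> + \<bar>b\<bar>) / real N < d"
    show "\<forall>\<sigma>\<in>{a..b}. dist (A (\<sigma> / real N + t)) (A t) < e"
    proof
      fix \<sigma> assume "\<sigma> \<in> {a..b}"
      then have "\<bar>\<sigma>\<bar> / real N \<le> (\<bar>a\<bar> + \<bar>b\<bar>) / real N"
        by (intro divide_right_mono) auto
      then show "dist (A (\<sigma> / real N + t)) (A t) < e"
        using N by (intro d) (simp add: dist_real_def)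
    qed
  qed
qed

section \<open>Exponential decay of frozen flows\<close>

lemma exists_small_of_square_integrable:
  fixes G :: "real \<Rightarrow> real" and P :: "real \<Rightarrow> 'a::real_normed_vector"
  assumes L2: "integrable lborel (\<lambda>v. indicator {0..} v * (G v)\<^sup>2)"
    and bound: "\<And>v. 0 \<le> v \<Longrightarrow> norm (P v) \<le> G v" and "0 < e"
  shows "\<exists>T\<ge>a. norm (P T) < e"
proof (rule ccontr)
  assume small: "\<not> ?thesis"
  define c where "c = max a 0"
  have ge: "e \<le> G v" if "c \<le> v" for v
    using small bound[of v] that by (force simp: c_def)
  have "integrable lborel (\<lambda>v. indicator {c..} v * e\<^sup>2)"
  proof (rule Bochner_Integration.integrable_bound[OF L2])
    show "(\<lambda>v. indicator {c..} v * e\<^sup>2) \<in> borel_measurable lborel"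
      by simp
    show "AE v in lborel. norm (indicator {c..} v * e\<^sup>2) \<le> norm (indicator {0..} v * (G v)\<^sup>2)"
    proof (rule AE_I2)
      fix v :: real
      have "e\<^sup>2 \<le> (G v)\<^sup>2" if "c \<le> v"
        using ge[OF that] \<open>0 < e\<close> by (intro power_mono) auto
      then show "norm (indicator {c..} v * e\<^sup>2) \<le> norm (indicator {0..} v * (G v)\<^sup>2)"
        by (auto simp: indicator_def c_def)
    qed
  qed
  then have "emeasure lborel {c..} < \<infinity>"
    using \<open>0 < e\<close> by (simp add: integrable_indicator_iff)
  then obtain m where m: "emeasure lborel {c..} = ennreal m" "0 \<le> m"
    by (cases "emeasure lborel {c..}") auto
  have "emeasure lborel {c..c + m + 1} \<le> emeasure lborel {c..}"
    by (rule emeasure_mono) auto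
  then show False
    using m by (simp add: ennreal_le_iff)
qed

lemma norm_le_exp_of_contraction:
  fixes P :: "real \<Rightarrow> real^'n^'n"
  assumes "0 < T"
    and step: "\<And>v. 0 \<le> v \<Longrightarrow> P (v + T) = P T ** P v"
    and half: "norm (P T) \<le> 1/2"
    and init: "\<And>w. 0 \<le> w \<Longrightarrow> w \<le> T \<Longrightarrow> norm (P w) \<le> K"
    and "0 \<le> v"
  shows "norm (P v) \<le> 2 * K * exp (- (ln 2 / T) * v)"
proof -
  have "0 \<le> K"
    using init[of 0] \<open>0 < T\<close> by (meson norm_ge_zero order_trans order_refl less_imp_le)
  have periods: "norm (P (w + real n * T)) \<le> K * (1/2)^n" if "0 \<le> w" "w \<le> T" for n w
  proof (induction n)
    case 0
    then show ?case using init[OF that] by simp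
  next
    case (Suc n)
    have "P (w + real (Suc n) * T) = P T ** P (w + real n * T)"
      using step[of "w + real n * T"] that \<open>0 < T\<close> by (simp add: algebra_simps)
    then have "norm (P (w + real (Suc n) * T)) \<le> norm (P T) * norm (P (w + real n * T))"
      by (simp add: norm_matrix_mult_le)
    also have "\<dots> \<le> 1/2 * (K * (1/2)^n)"
      using half Suc.IH by (intro mult_mono) auto
    finally show ?case
      by simp
  qed
  define n where "n = nat \<lfloor>v / T\<rfloor>"
  have n: "real n \<le> v / T" "v / T < real n + 1"
    using \<open>0 \<le> v\<close> \<open>0 < T\<close> by (simp_all add: n_def)
  have "norm (P v) \<le> K * (1/2)^n"
    using periods[of "v - real n * T" n] n \<open>0 < T\<close> by (simp add: field_simps)
  also have "(1/2::real)^n = exp (- (real n * ln 2))"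
    by (simp add: exp_minus exp_of_nat_mult power_one_over inverse_eq_divide)
  also have "exp (- (real n * ln 2)) \<le> exp (ln 2 - ln 2 / T * v)"
  proof -
    have "ln 2 * (v / T - 1) \<le> ln 2 * real n"
      using n by (intro mult_left_mono) auto
    then show ?thesis
      by (simp add: algebra_simps)
  qed
  also have "exp (ln 2 - ln 2 / T * v) = 2 * exp (- (ln 2 / T) * v)"
    by (simp add: exp_diff exp_minus divide_inverse)
  finally show ?thesis
    using \<open>0 \<le> K\<close> by (simp add: mult_left_mono mult.assoc)
qed

lemma transition_matrix_const_norm_le:
  fixes X :: "real \<Rightarrow> real \<Rightarrow> real^'n^'n"
  assumes X: "transition_matrix (\<lambda>_. A0) X" and "norm A0 \<le> K" "0 \<le> w" "w \<le> T"
  shows "norm (X 0 (-w)) \<le> exp ((K + 1/2) * T) * norm (mat 1 :: real^'n^'n)"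
proof (rule power2_le_imp_le)
  have "0 \<le> K"
    using \<open>norm A0 \<le> K\<close> by (rule order_trans[OF norm_ge_zero])
  have "(norm (X 0 (-w)))\<^sup>2 \<le> exp ((2*K + 1) * (0 - -w)) * (norm (mat 1 :: real^'n^'n))\<^sup>2"
    by (rule transition_matrix_growth[OF X]) (use assms in auto)
  also have "\<dots> \<le> exp ((2*K + 1) * T) * (norm (mat 1 :: real^'n^'n))\<^sup>2"
    using assms \<open>0 \<le> K\<close> by (intro mult_right_mono) (simp_all add: mult_left_mono)
  also have "exp ((2*K + 1) * T) = (exp ((K + 1/2) * T))\<^sup>2"
    by (simp add: exp_double[symmetric] algebra_simps)
  finally show "(norm (X 0 (-w)))\<^sup>2 \<le> (exp ((K + 1/2) * T) * norm (mat 1 :: real^'n^'n))\<^sup>2"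
    by (simp add: power_mult_distrib)
qed simp

text \<open>Square integrability of the frozen flow at t turns into exponential decay, locally
  uniformly in s: once the flow at t has contracted by a factor 4 at some time T, the flows at
  nearby s contract by a factor 2, and the semigroup property iterates this.\<close>
lemma transition_matrix_const_exp_decay:
  fixes Psi :: "real \<Rightarrow> real \<Rightarrow> real \<Rightarrow> real^'n^'n" and G :: "real \<Rightarrow> real"
  assumes flows: "\<And>s. transition_matrix (\<lambda>_. A s) (Psi s)" and "isCont A t"
    and L2: "integrable lborel (\<lambda>v. indicator {0..} v * (G v)\<^sup>2)"
    and bound: "\<And>v. 0 \<le> v \<Longrightarrow> norm (Psi t 0 (-v)) \<le> G v"
  shows "\<exists>G0 \<mu>. 0 < \<mu> \<and> (\<forall>\<^sub>F s in nhds t. \<forall>v\<ge>0. norm (Psi s 0 (-v)) \<le> G0 * exp (- \<mu> * v))"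
proof -
  obtain T where "1 \<le> T" and T: "norm (Psi t 0 (-T)) < 1/4"
    using exists_small_of_square_integrable[OF L2, of "\<lambda>v. Psi t 0 (-v)" "1/4" 1] bound by auto
  have "((\<lambda>s. Psi s 0 (-T)) \<longlongrightarrow> Psi t 0 (-T)) (at t)"
  proof (rule transition_matrix_tendsto[where M="\<lambda>s _. A s"])
    show "uniform_limit {-T..0} (\<lambda>s _. A s) (\<lambda>_. A t) (at t)"
      using \<open>isCont A t\<close> by (intro uniform_limit_of_tendsto_const_fun) (simp add: isCont_def)
  qed (use flows \<open>1 \<le> T\<close> in auto)
  then have "((\<lambda>s. Psi s 0 (-T)) \<longlongrightarrow> Psi t 0 (-T)) (nhds t)"
    by (rule tendsto_at_iff_tendsto_nhds[THEN iffD1])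
  then have contracts: "\<forall>\<^sub>F s in nhds t. dist (Psi s 0 (-T)) (Psi t 0 (-T)) < 1/4"
    by (rule tendstoD) simp
  have "(A \<longlongrightarrow> A t) (nhds t)"
    using \<open>isCont A t\<close> unfolding isCont_def by (rule tendsto_at_iff_tendsto_nhds[THEN iffD1])
  then have bounded: "\<forall>\<^sub>F s in nhds t. norm (A s) < norm (A t) + 1"
    by (rule order_tendstoD(2)[OF tendsto_norm]) linarith
  define K where "K = exp ((norm (A t) + 1 + 1/2) * T) * norm (mat 1 :: real^'n^'n)"
  have "\<forall>\<^sub>F s in nhds t. \<forall>v\<ge>0. norm (Psi s 0 (-v)) \<le> 2 * K * exp (- (ln 2 / T) * v)"
    using contracts bounded
  proof eventually_elim
    case (elim s)
    have "norm (Psi s 0 (-T)) \<le> 1/2"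
      using elim(1) T norm_triangle_ineq2[of "Psi s 0 (-T)" "Psi t 0 (-T)"] by (simp add: dist_norm)
    moreover have "norm (Psi s 0 (-w)) \<le> K" if "0 \<le> w" "w \<le> T" for w
      unfolding K_def using elim(2) that by (intro transition_matrix_const_norm_le[OF flows]) auto
    ultimately show ?case
      using \<open>1 \<le> T\<close> transition_matrix_const_semigroup[OF flows]
      by (intro allI impI norm_le_exp_of_contraction[where P="\<lambda>v. Psi s 0 (-v)"]) auto
  qed
  then show ?thesis
    using \<open>1 \<le> T\<close> by (intro exI[of _ "2 * K"] exI[of _ "ln 2 / T"]) simp
qed

section \<open>Square integrable kernels\<close>

lemma L2_real_of_dominated:
  fixes f W :: "real \<Rightarrow> real"
  assumes "f \<in> borel_measurable lborel" "integrable lborel (\<lambda>x. (W x)\<^sup>2)" "\<And>x. \<bar>f x\<bar> \<le> W x"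
  shows "L2_real f"
  unfolding L2_real_def
proof
  show "integrable lborel (\<lambda>x. (f x)\<^sup>2)"
  proof (rule Bochner_Integration.integrable_bound[OF assms(2)])
    show "AE x in lborel. norm ((f x)\<^sup>2) \<le> norm ((W x)\<^sup>2)"
    proof (rule AE_I2)
      fix x
      have "0 \<le> W x"
        using abs_ge_zero assms(3) by (rule order_trans)
      then show "norm ((f x)\<^sup>2) \<le> norm ((W x)\<^sup>2)"
        using power2_le_iff_abs_le[of "W x" "f x"] assms(3)[of x] by simp
    qed
  qed (use assms(1) in measurable)
qed fact

lemma L2_dist_sq_tendsto_zero:
  fixes f :: "nat \<Rightarrow> real \<Rightarrow> real" and h W :: "real \<Rightarrow> real"
  assumes meas: "\<forall>\<^sub>F i in sequentially. f i \<in> borel_measurable lborel"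
    and "h \<in> borel_measurable lborel" "integrable lborel (\<lambda>x. (W x)\<^sup>2)"
    and lim: "\<And>x. (\<lambda>i. f i x) \<longlonglongrightarrow> h x"
    and dom: "\<forall>\<^sub>F i in sequentially. \<forall>x. \<bar>f i x\<bar> \<le> W x" and "\<And>x. \<bar>h x\<bar> \<le> W x"
  shows "(\<lambda>i. L2_dist_sq (f i) h) \<longlonglongrightarrow> 0"
proof -
  obtain i0 where i0: "\<And>i. i0 \<le> i \<Longrightarrow> f i \<in> borel_measurable lborel \<and> (\<forall>x. \<bar>f i x\<bar> \<le> W x)"
    using eventually_conj[OF meas dom] unfolding eventually_sequentially by blast
  have bound: "AE x in lborel. norm ((f (i + i0) x - h x)\<^sup>2) \<le> 4 * (W x)\<^sup>2" for i
  proof (rule AE_I2)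
    fix x
    have "\<bar>f (i + i0) x\<bar> \<le> W x"
      using i0[of "i + i0"] by simp
    then have "\<bar>f (i + i0) x - h x\<bar> \<le> 2 * W x"
      using assms(6)[of x] abs_triangle_ineq4[of "f (i + i0) x" "h x"] by linarith
    then show "norm ((f (i + i0) x - h x)\<^sup>2) \<le> 4 * (W x)\<^sup>2"
      using power2_le_iff_abs_le[of "2 * W x" "f (i + i0) x - h x"] assms(6)[of x]
      by (simp add: power_mult_distrib)
  qed
  have lim_sq: "AE x in lborel. (\<lambda>i. (f (i + i0) x - h x)\<^sup>2) \<longlonglongrightarrow> 0"
  proof (rule AE_I2)
    fix x
    have "(\<lambda>i. f (i + i0) x) \<longlonglongrightarrow> h x"
      using lim by (rule LIMSEQ_ignore_initial_segment)
    then have "(\<lambda>i. f (i + i0) x - h x) \<longlonglongrightarrow> 0"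
      by (rule LIM_zero)
    then show "(\<lambda>i. (f (i + i0) x - h x)\<^sup>2) \<longlonglongrightarrow> 0"
      using tendsto_power[of _ 0 sequentially 2] by simp
  qed
  have meas_sq: "(\<lambda>x. (f (i + i0) x - h x)\<^sup>2) \<in> borel_measurable lborel" for i
  proof -
    have "f (i + i0) \<in> borel_measurable lborel"
      using i0[of "i + i0"] by simp
    then show ?thesis
      using assms(2) by (intro borel_measurable_power borel_measurable_diff)
  qed
  from Bochner_Integration.integral_dominated_convergence[OF borel_measurable_const meas_sq _ lim_sq bound]
  have "(\<lambda>i. LINT x|lborel. (f (i + i0) x - h x)\<^sup>2) \<longlonglongrightarrow> 0"
    using assms(3) by simp
  then show ?thesis
    unfolding L2_dist_sq_def by (rule LIMSEQ_offset[where k=i0])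
qed

lemma L2_dist_sq_tendsto_zero_at:
  fixes f :: "real \<Rightarrow> real \<Rightarrow> real" and h W :: "real \<Rightarrow> real"
  assumes "\<forall>\<^sub>F s in at t. f s \<in> borel_measurable lborel"
    and "h \<in> borel_measurable lborel" "integrable lborel (\<lambda>x. (W x)\<^sup>2)"
    and "\<And>x. ((\<lambda>s. f s x) \<longlongrightarrow> h x) (at t)"
    and "\<forall>\<^sub>F s in at t. \<forall>x. \<bar>f s x\<bar> \<le> W x" and "\<And>x. \<bar>h x\<bar> \<le> W x"
  shows "((\<lambda>s. L2_dist_sq (f s) h) \<longlongrightarrow> 0) (at t)"
  unfolding tendsto_at_iff_sequentially
proof (intro allI impI)
  fix X :: "nat \<Rightarrow> real" assume "\<forall>i. X i \<in> UNIV - {t}" "X \<longlonglongrightarrow> t"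
  then have X: "filterlim X (at t) sequentially"
    by (simp add: filterlim_at)
  show "((\<lambda>s. L2_dist_sq (f s) h) \<circ> X) \<longlonglongrightarrow> 0"
    unfolding o_def
    using assms(2,3,6) filterlim_compose[OF assms(4) X]
      filterlim_iff[THEN iffD1, OF X, rule_format, OF assms(1)]
      filterlim_iff[THEN iffD1, OF X, rule_format, OF assms(5)]
    by (intro L2_dist_sq_tendsto_zero) auto
qed

lemma abs_inner_matrix_vector_mult_le:
  fixes b c :: "real^'n" and P :: "real^'n^'n"
  assumes "norm b \<le> \<beta>" "norm P \<le> \<pi>" "norm c \<le> \<gamma>"
  shows "\<bar>b \<bullet> (P *v c)\<bar> \<le> \<beta> * \<gamma> * \<pi>"
proof -
  have "\<bar>b \<bullet> (P *v c)\<bar> \<le> norm b * norm (P *v c)"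
    by (rule Cauchy_Schwarz_ineq2)
  also have "\<dots> \<le> norm b * (norm P * norm c)"
    by (intro mult_left_mono norm_matrix_vector_mult_le norm_ge_zero)
  also have "\<dots> \<le> \<beta> * (\<pi> * \<gamma>)"
    using assms by (intro mult_mono) (auto intro: order_trans[OF norm_ge_zero])
  finally show ?thesis
    by (simp add: mult_ac)
qed

lemma borel_measurable_if_nonneg:
  fixes g :: "real \<Rightarrow> real"
  assumes "continuous_on {0..} g"
  shows "(\<lambda>v. if 0 \<le> v then g v else 0) \<in> borel_measurable lborel"
proof -
  have "(\<lambda>v. indicator {0..} v *\<^sub>R g v) \<in> borel_measurable borel"
    using assms by (rule borel_measurable_continuous_on_indicator[OF closed_atLeast[THEN borel_closed]])
  also have "(\<lambda>v. indicator {0..} v *\<^sub>R g v) = (\<lambda>v. if 0 \<le> v then g v else 0)"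
    by (auto simp: indicator_def)
  finally show ?thesis
    by simp
qed

lemma integrable_reflect_nonpos:
  fixes G :: "real \<Rightarrow> real"
  assumes "set_integrable lborel {..0} (\<lambda>u. (G u)\<^sup>2)"
  shows "integrable lborel (\<lambda>v. indicator {0..} v * (G (- v))\<^sup>2)"
proof -
  have "integrable lborel (\<lambda>u. indicator {..0} u * (G u)\<^sup>2)"
    using assms by (simp add: set_integrable_def)
  then have "integrable lborel (\<lambda>v. indicator {..0} (0 + (-1) * v) * (G (0 + (-1) * v))\<^sup>2)"
    using lborel_integrable_real_affine_iff[of "-1" "\<lambda>u. indicator {..0} u * (G u)\<^sup>2" 0] by simp
  moreover have "indicator {..0} (0 + (-1) * v) = (indicator {0..} v :: real)" for v :: real
    by (simp add: indicator_def)
  ultimately show ?thesis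
    by simp
qed

lemma integrable_halfline_scaled_sq:
  fixes G :: "real \<Rightarrow> real"
  assumes "integrable lborel (\<lambda>v. indicator {0..} v * (G v)\<^sup>2)"
  shows "integrable lborel (\<lambda>v. (indicator {0..} v * (c * G v))\<^sup>2)"
proof -
  have "(\<lambda>v. (indicator {0..} v * (c * G v))\<^sup>2) = (\<lambda>v. c\<^sup>2 * (indicator {0..} v * (G v)\<^sup>2))"
    by (auto simp: indicator_def power_mult_distrib)
  then show ?thesis
    using assms by simp
qed

lemma integrable_halfline_exp_sq:
  assumes "0 < \<mu>"
  shows "integrable lborel (\<lambda>v::real. (indicator {0..} v * (c * exp (- \<mu> * v)))\<^sup>2)"
proof -
  have "integrable lebesgue (\<lambda>v::real. indicator {0..} v *\<^sub>R exp (- (2 * \<mu>) * v))"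
    using assms by (intro nonnegative_absolutely_integrable_1[unfolded set_integrable_def]
        integrable_on_exp_minus_to_infinity) auto
  moreover have "(\<lambda>v::real. indicator {0..} v *\<^sub>R exp (- (2 * \<mu>) * v)) \<in> borel_measurable lborel"
    by measurable
  ultimately have "integrable lborel (\<lambda>v::real. indicator {0..} v * (exp (- \<mu> * v))\<^sup>2)"
    by (simp add: integrable_completion exp_double[symmetric] mult.assoc)
  then show ?thesis
    by (rule integrable_halfline_scaled_sq)
qed

section \<open>Time-varying linear state space models\<close>

locale tv_state_space =
  fixes A :: "real \<Rightarrow> real^'p^'p"
    and B C :: "real \<Rightarrow> real^'p"
    and Psi0 :: "nat \<Rightarrow> real \<Rightarrow> real \<Rightarrow> real \<Rightarrow> real^'p^'p"
    and Psi :: "real \<Rightarrow> real \<Rightarrow> real \<Rightarrow> real^'p^'p"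
    and F :: "real \<Rightarrow> real \<Rightarrow> real"
  assumes Psi0_init: "\<And>N t s0. N \<ge> 1 \<Longrightarrow> Psi0 N t s0 s0 = mat 1"
    and Psi0_ode: "\<And>N t s s0. N \<ge> 1 \<Longrightarrow>
          ((\<lambda>s. Psi0 N t s s0) has_vector_derivative (A (s / real N + t) ** Psi0 N t s s0)) (at s)"
    and Psi_init: "\<And>t s0. Psi t s0 s0 = mat 1"
    and Psi_ode: "\<And>t s s0. ((\<lambda>s. Psi t s s0) has_vector_derivative (A t ** Psi t s s0)) (at s)"
    and C1: "continuous_on UNIV A" "continuous_on UNIV B" "continuous_on UNIV C"
    and C2: "bounded (range C)"
    and C3_L2: "\<And>t. set_integrable lborel {..0} (\<lambda>u. (F t u)\<^sup>2)"
    and C3_bound: "\<And>t u N. u \<le> 0 \<Longrightarrow> N \<ge> 1 \<Longrightarrow> norm (Psi0 N t 0 u) \<le> F t u"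
begin

lemma isCont_A: "isCont A t" and isCont_B: "isCont B t" and isCont_C: "isCont C t"
  using C1 by (simp_all add: continuous_on_eq_continuous_at)

lemma transition_matrix_Psi0:
  assumes "N \<ge> 1"
  shows "transition_matrix (\<lambda>s. A (s / real N + t)) (Psi0 N t)"
proof -
  have "continuous_on UNIV (\<lambda>s. A (s / real N + t))"
    by (rule continuous_on_compose2[OF C1(1)]) (use assms in \<open>auto intro!: continuous_intros\<close>)
  then show ?thesis
    unfolding transition_matrix_def using Psi0_init[OF assms] Psi0_ode[OF assms] by blast
qed

lemma transition_matrix_Psi: "transition_matrix (\<lambda>_. A t) (Psi t)"
  unfolding transition_matrix_def using Psi_init Psi_ode by simp

lemma Psi0_tendsto_Psi:
  assumes "u \<le> 0"
  shows "(\<lambda>N. Psi0 N t 0 u) \<longlonglongrightarrow> Psi t 0 u"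
proof (rule transition_matrix_tendsto[OF _ transition_matrix_Psi assms])
  show "\<forall>\<^sub>F N in sequentially. transition_matrix (\<lambda>s. A (s / real N + t)) (Psi0 N t)"
    using eventually_ge_at_top[of 1] by eventually_elim (rule transition_matrix_Psi0)
  show "uniform_limit {u..0} (\<lambda>N s. A (s / real N + t)) (\<lambda>_. A t) sequentially"
    by (rule uniform_limit_rescaled_time[OF isCont_A])
qed

lemma Psi_tendsto_at:
  assumes "u \<le> 0"
  shows "((\<lambda>s. Psi s 0 u) \<longlongrightarrow> Psi t 0 u) (at t)"
proof (rule transition_matrix_tendsto[OF _ transition_matrix_Psi assms])
  show "uniform_limit {u..0} (\<lambda>s _. A s) (\<lambda>_. A t) (at t)"
    using isCont_A by (intro uniform_limit_of_tendsto_const_fun) (simp add: isCont_def)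
qed (simp add: transition_matrix_Psi)

lemma norm_Psi_le: "u \<le> 0 \<Longrightarrow> norm (Psi t 0 u) \<le> F t u"
  using C3_bound eventually_ge_at_top[of 1]
  by (intro LIMSEQ_le_const2[OF tendsto_norm[OF Psi0_tendsto_Psi]]) (auto simp: eventually_sequentially)

lemma tv_kernel_eq:
  "tv_kernel B C Psi0 N t = (\<lambda>v. if 0 \<le> v then B t \<bullet> (Psi0 N t 0 (- v) *v C (t - v / real N)) else 0)"
  by (simp add: fun_eq_iff tv_kernel_def)

lemma lim_kernel_eq: "lim_kernel B C Psi t = (\<lambda>v. if 0 \<le> v then B t \<bullet> (Psi t 0 (- v) *v C t) else 0)"
  by (simp add: fun_eq_iff lim_kernel_def)

lemma C_bounded: obtains \<gamma> where "\<And>x. norm (C x) \<le> \<gamma>"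
  using C2 unfolding bounded_iff by blast

lemma kernels_dominated:
  "\<exists>W. integrable lborel (\<lambda>v. (W v)\<^sup>2) \<and> (\<forall>N v. 1 \<le> N \<longrightarrow> \<bar>tv_kernel B C Psi0 N t v\<bar> \<le> W v) \<and>
     (\<forall>v. \<bar>lim_kernel B C Psi t v\<bar> \<le> W v)"
proof -
  obtain \<gamma> where \<gamma>: "\<And>x. norm (C x) \<le> \<gamma>"
    using C_bounded by blast
  define W where "W v = indicator {0..} v * (norm (B t) * \<gamma> * F t (- v))" for v
  have "integrable lborel (\<lambda>v. (W v)\<^sup>2)"
    unfolding W_def by (intro integrable_halfline_scaled_sq integrable_reflect_nonpos C3_L2)
  moreover have "\<bar>tv_kernel B C Psi0 N t v\<bar> \<le> W v" if "1 \<le> N" for N v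
  proof (cases "0 \<le> v")
    case True
    have "\<bar>B t \<bullet> (Psi0 N t 0 (- v) *v C (t - v / real N))\<bar> \<le> norm (B t) * \<gamma> * F t (- v)"
      by (intro abs_inner_matrix_vector_mult_le order_refl \<gamma> C3_bound that) (use True in simp)
    then show ?thesis
      using True by (simp add: tv_kernel_eq W_def)
  qed (simp add: tv_kernel_eq W_def)
  moreover have "\<bar>lim_kernel B C Psi t v\<bar> \<le> W v" for v
  proof (cases "0 \<le> v")
    case True
    have "\<bar>B t \<bullet> (Psi t 0 (- v) *v C t)\<bar> \<le> norm (B t) * \<gamma> * F t (- v)"
      by (intro abs_inner_matrix_vector_mult_le order_refl \<gamma> norm_Psi_le) (use True in simp)
    then show ?thesis
      using True by (simp add: lim_kernel_eq W_def)
  qed (simp add: lim_kernel_eq W_def)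
  ultimately show ?thesis
    by blast
qed

lemma tv_kernel_measurable:
  assumes "1 \<le> N"
  shows "tv_kernel B C Psi0 N t \<in> borel_measurable lborel"
proof -
  have "continuous_on {0..} (\<lambda>v. Psi0 N t 0 (- v))"
    by (rule continuous_on_compose2[OF transition_matrix_continuous_on_initial_time[OF
          transition_matrix_Psi0[OF assms]]]) (auto intro!: continuous_intros)
  moreover have "continuous_on {0..} (\<lambda>v. C (t - v / real N))"
    by (rule continuous_on_compose2[OF C1(3)]) (use assms in \<open>auto intro!: continuous_intros\<close>)
  ultimately show ?thesis
    unfolding tv_kernel_eq
    by (intro borel_measurable_if_nonneg continuous_on_inner continuous_on_const
        matrix_vector_mult.continuous_on)
qed

lemma lim_kernel_measurable: "lim_kernel B C Psi t \<in> borel_measurable lborel"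
proof -
  have "continuous_on {0..} (\<lambda>v. Psi t 0 (- v))"
    by (rule continuous_on_compose2[OF transition_matrix_continuous_on_initial_time[OF
          transition_matrix_Psi]]) (auto intro!: continuous_intros)
  then show ?thesis
    unfolding lim_kernel_eq
    by (intro borel_measurable_if_nonneg continuous_on_inner continuous_on_const
        matrix_vector_mult.continuous_on)
qed

lemma tv_kernel_tendsto: "(\<lambda>N. tv_kernel B C Psi0 N t v) \<longlonglongrightarrow> lim_kernel B C Psi t v"
proof (cases "0 \<le> v")
  case True
  have "(\<lambda>N. t - v / real N) \<longlonglongrightarrow> t - 0"
    by (intro tendsto_intros lim_const_over_n)
  then have "(\<lambda>N. C (t - v / real N)) \<longlonglongrightarrow> C t"
    by (intro isCont_tendsto_compose[OF isCont_C]) simp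
  then show ?thesis
    using True Psi0_tendsto_Psi[of "- v" t]
    by (simp add: tv_kernel_eq lim_kernel_eq tendsto_inner tendsto_const matrix_vector_mult.tendsto)
qed (simp add: tv_kernel_eq lim_kernel_eq)

lemma lim_kernel_tendsto_at: "((\<lambda>s. lim_kernel B C Psi s v) \<longlongrightarrow> lim_kernel B C Psi t v) (at t)"
proof (cases "0 \<le> v")
  case True
  then show ?thesis
    using isCont_B[of t] isCont_C[of t] Psi_tendsto_at[of "- v" t]
    by (simp add: lim_kernel_eq isCont_def tendsto_inner matrix_vector_mult.tendsto)
qed (simp add: lim_kernel_eq)

lemma lim_kernel_locally_dominated:
  "\<exists>W. integrable lborel (\<lambda>v. (W v)\<^sup>2) \<and> (\<forall>\<^sub>F s in nhds t. \<forall>v. \<bar>lim_kernel B C Psi s v\<bar> \<le> W v)"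
proof -
  obtain \<gamma> where \<gamma>: "\<And>x. norm (C x) \<le> \<gamma>"
    using C_bounded by blast
  have "\<exists>G0 \<mu>. 0 < \<mu> \<and> (\<forall>\<^sub>F s in nhds t. \<forall>v\<ge>0. norm (Psi s 0 (- v)) \<le> G0 * exp (- \<mu> * v))"
    by (rule transition_matrix_const_exp_decay[OF transition_matrix_Psi isCont_A
        integrable_reflect_nonpos[OF C3_L2]]) (rule norm_Psi_le, simp)
  then obtain G0 \<mu> where "0 < \<mu>"
    and decay: "\<forall>\<^sub>F s in nhds t. \<forall>v\<ge>0. norm (Psi s 0 (- v)) \<le> G0 * exp (- \<mu> * v)"
    by blast
  have "(B \<longlongrightarrow> B t) (nhds t)"
    using isCont_B unfolding isCont_def by (rule tendsto_at_iff_tendsto_nhds[THEN iffD1])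
  then have B_near: "\<forall>\<^sub>F s in nhds t. norm (B s) < norm (B t) + 1"
    by (rule order_tendstoD(2)[OF tendsto_norm]) linarith
  define W where "W v = indicator {0..} v * ((norm (B t) + 1) * \<gamma> * G0 * exp (- \<mu> * v))" for v
  have "integrable lborel (\<lambda>v. (W v)\<^sup>2)"
    unfolding W_def by (rule integrable_halfline_exp_sq[OF \<open>0 < \<mu>\<close>])
  moreover have "\<forall>\<^sub>F s in nhds t. \<forall>v. \<bar>lim_kernel B C Psi s v\<bar> \<le> W v"
    using decay B_near
  proof eventually_elim
    case (elim s)
    show ?case
    proof
      fix v
      show "\<bar>lim_kernel B C Psi s v\<bar> \<le> W v"
      proof (cases "0 \<le> v")
        case True
        have "\<bar>B s \<bullet> (Psi s 0 (- v) *v C s)\<bar> \<le> (norm (B t) + 1) * \<gamma> * (G0 * exp (- \<mu> * v))"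
          using elim True by (intro abs_inner_matrix_vector_mult_le \<gamma>) auto
        then show ?thesis
          using True by (simp add: lim_kernel_eq W_def mult.assoc)
      qed (simp add: lim_kernel_eq W_def)
    qed
  qed
  ultimately show ?thesis
    by blast
qed

lemma tv_kernel_L2: "1 \<le> N \<Longrightarrow> L2_real (tv_kernel B C Psi0 N t)"
  using kernels_dominated[of t] tv_kernel_measurable by (blast intro: L2_real_of_dominated)

lemma lim_kernel_L2: "L2_real (lim_kernel B C Psi t)"
  using kernels_dominated[of t] lim_kernel_measurable by (blast intro: L2_real_of_dominated)

lemma tv_kernel_L2_convergence:
  "(\<lambda>N. L2_dist_sq (tv_kernel B C Psi0 N t) (lim_kernel B C Psi t)) \<longlonglongrightarrow> 0"
proof -
  obtain W where "integrable lborel (\<lambda>v. (W v)\<^sup>2)"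
    and dom: "\<And>N v. 1 \<le> N \<Longrightarrow> \<bar>tv_kernel B C Psi0 N t v\<bar> \<le> W v"
    and "\<And>v. \<bar>lim_kernel B C Psi t v\<bar> \<le> W v"
    using kernels_dominated[of t] by blast
  then show ?thesis
  proof (intro L2_dist_sq_tendsto_zero lim_kernel_measurable tv_kernel_tendsto)
    show "\<forall>\<^sub>F N in sequentially. tv_kernel B C Psi0 N t \<in> borel_measurable lborel"
      using eventually_ge_at_top[of 1] by (rule eventually_mono) (rule tv_kernel_measurable)
    show "\<forall>\<^sub>F N in sequentially. \<forall>v. \<bar>tv_kernel B C Psi0 N t v\<bar> \<le> W v"
      using eventually_ge_at_top[of 1] by (rule eventually_mono) (use dom in blast)
  qed
qed

lemma lim_kernel_L2_continuous:
  "((\<lambda>s. L2_dist_sq (lim_kernel B C Psi s) (lim_kernel B C Psi t)) \<longlongrightarrow> 0) (at t)"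
proof -
  obtain W where W: "integrable lborel (\<lambda>v. (W v)\<^sup>2)"
    and dom: "\<forall>\<^sub>F s in nhds t. \<forall>v. \<bar>lim_kernel B C Psi s v\<bar> \<le> W v"
    using lim_kernel_locally_dominated[of t] by blast
  have dom_at: "\<forall>\<^sub>F s in at t. \<forall>v. \<bar>lim_kernel B C Psi s v\<bar> \<le> W v"
    using dom unfolding eventually_at_filter by (rule eventually_mono) simp
  show ?thesis
  proof (rule L2_dist_sq_tendsto_zero_at[OF _ lim_kernel_measurable W lim_kernel_tendsto_at dom_at])
    show "\<forall>\<^sub>F s in at t. lim_kernel B C Psi s \<in> borel_measurable lborel"
      by (rule always_eventually, rule allI, rule lim_kernel_measurable)
    show "\<bar>lim_kernel B C Psi t v\<bar> \<le> W v" for v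
      using eventually_nhds_x_imp_x[OF dom] by blast
  qed
qed

end

theorem proposition4:
  fixes A :: "real \<Rightarrow> real^'p^'p"
    and B C :: "real \<Rightarrow> real^'p"
    and Psi0 :: "nat \<Rightarrow> real \<Rightarrow> real \<Rightarrow> real \<Rightarrow> real^'p^'p"
    and Psi :: "real \<Rightarrow> real \<Rightarrow> real \<Rightarrow> real^'p^'p"
    and F :: "real \<Rightarrow> real \<Rightarrow> real"
  assumes Psi0_init: "\<And>N t s0. N \<ge> 1 \<Longrightarrow> Psi0 N t s0 s0 = mat 1"
    and Psi0_ode: "\<And>N t s s0. N \<ge> 1 \<Longrightarrow>
          ((\<lambda>s. Psi0 N t s s0) has_vector_derivative (A (s / real N + t) ** Psi0 N t s s0)) (at s)"
    and Psi_init: "\<And>t s0. Psi t s0 s0 = mat 1"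
    and Psi_ode: "\<And>t s s0. ((\<lambda>s. Psi t s s0) has_vector_derivative (A t ** Psi t s s0)) (at s)"
    and C1: "continuous_on UNIV A" "continuous_on UNIV B" "continuous_on UNIV C"
    and C2: "bounded (range C)"
    and C3_meas: "\<And>t. F t \<in> borel_measurable lborel"
    and C3_L2: "\<And>t. set_integrable lborel {..0} (\<lambda>u. (F t u)\<^sup>2)"
    and C3_bound: "\<And>t u N. u \<le> 0 \<Longrightarrow> N \<ge> 1 \<Longrightarrow> norm (Psi0 N t 0 u) \<le> F t u"
  shows "locally_stationary_kernels (tv_kernel B C Psi0) (lim_kernel B C Psi)"
proof -
  interpret tv_state_space A B C Psi0 Psi F
    by (unfold_locales; fact)
  show ?thesis
    unfolding locally_stationary_kernels_def
    using tv_kernel_L2 lim_kernel_L2 lim_kernel_L2_continuous tv_kernel_L2_convergence by blast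
qed

end
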